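(* If $(X;\leq)$ is a representable poset, then each order component $Y$ of $X$ (with the induced order) is compact with respect to its interval topology $\tau_i(Y)$.
   Context: A poset is representable if it is order-isomorphic to the poset of prime ideals (ordered by inclusion) of a bounded distributive lattice; equivalently, iff there is a topology $\tau$ on $X$ with $(X;\tau)$ compact and such that whenever $x\not\geq y$ there is a clopen down-set containing $x$ but not $y$ (a Priestley space). For a poset $X$, let $R=\{(x,y): x\le y \text{ or } y\le x\}$ and $R'$ its transitive closure; an order component of $X$ is an equivalence class of $R'$. The interval topology $\tau_i(Y)$ of a poset $Y$ is the topology with subbase $\{Y\setminus (y]: y\in Y\}\cup\{Y\setminus [y): y\in Y\}$, where $(y]=\{z\in Y: z\le y\}$, $[y)=\{z\in Y: z\ge y\}$. *)

theory Defs
  imports "HOL-Analysis.Analysis"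
begin

text \<open>A poset is modelled as a type with a partial order (class order).
  Representable = admits a Priestley topology (compact, and order-separated by
  clopen down-sets).\<close>

definition priestley_space :: "'a::order topology \<Rightarrow> bool" where
  "priestley_space T \<longleftrightarrow> topspace T = UNIV \<and> compact_space T \<and>
     (\<forall>x y. \<not> (y \<le> x) \<longrightarrow>
        (\<exists>U. openin T U \<and> closedin T U \<and> (\<forall>u\<in>U. \<forall>v. v \<le> u \<longrightarrow> v \<in> U)
             \<and> x \<in> U \<and> y \<notin> U))"

definition representable :: "'a::order itself \<Rightarrow> bool" where
  "representable _ \<longleftrightarrow> (\<exists>T::'a topology. priestley_space T)"

definition comparable_rel :: "('a::order \<times> 'a) set" where
  "comparable_rel = {(x, y). x \<le> y \<or> y \<le> x}"

definition order_components :: "'a::order set set" where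
  "order_components = UNIV // (comparable_rel\<^sup>+)"

definition interval_subbase :: "'a::order set \<Rightarrow> 'a set set" where
  "interval_subbase Y = {Y - {z\<in>Y. z \<le> y} | y. y \<in> Y} \<union> {Y - {z\<in>Y. y \<le> z} | y. y \<in> Y}"

definition interval_topology :: "'a::order set \<Rightarrow> 'a topology" where
  "interval_topology Y =
     topology (arbitrary union_of ((finite intersection_of (\<lambda>S. S \<in> interval_subbase Y)) relative_to Y))"

end

theory Submission
  imports Defs
begin

text \<open>Let \<open>T\<close> be a Priestley topology on \<open>X\<close> and \<open>Y\<close> an order component. For \<open>y \<in> Y\<close> the
  sets \<open>X - (y]\<close> and \<open>X - [y)\<close> are open in \<open>T\<close>, and since \<open>Y\<close> is closed under comparability they
  contain \<open>X - Y\<close> and meet \<open>Y\<close> in the subbasic sets of \<open>\<tau>\<^sub>i(Y)\<close>. Hence every nonempty open set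
  \<open>U\<close> of \<open>\<tau>\<^sub>i(Y)\<close> extends to the \<open>T\<close>-open set \<open>U \<union> (X - Y)\<close>, and a cover of \<open>Y\<close> by such sets
  becomes a cover of the compact space \<open>X\<close>.\<close>

lemma compact_space_if_open_Un_complement:
  assumes "compact_space T" "topspace S \<subseteq> topspace T"
    and lift: "\<And>U. openin S U \<Longrightarrow> U \<noteq> {} \<Longrightarrow> openin T (U \<union> (topspace T - topspace S))"
  shows "compact_space S"
  unfolding compact_space_alt
proof (intro allI impI)
  fix \<U> assume \<U>: "(\<forall>U\<in>\<U>. openin S U) \<and> topspace S \<subseteq> \<Union>\<U>"
  define K where "K = topspace T - topspace S"
  show "\<exists>\<F>. finite \<F> \<and> \<F> \<subseteq> \<U> \<and> topspace S \<subseteq> \<Union>\<F>"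
  proof (cases "topspace S = {}")
    case False
    define \<V> where "\<V> = \<U> - {{}}"
    obtain U0 where U0: "U0 \<in> \<V>" using False \<U> unfolding \<V>_def by blast
    have "topspace T \<subseteq> \<Union>((\<lambda>U. U \<union> K) ` \<V>)"
      using \<U> U0 unfolding \<V>_def K_def by blast
    moreover have "\<forall>V \<in> (\<lambda>U. U \<union> K) ` \<V>. openin T V"
      using \<U> lift unfolding \<V>_def K_def by blast
    ultimately obtain \<F>' where "finite \<F>'" "\<F>' \<subseteq> (\<lambda>U. U \<union> K) ` \<V>" "topspace T \<subseteq> \<Union>\<F>'"
      using assms(1) unfolding compact_space_alt by meson
    then obtain \<F> where \<F>: "finite \<F>" "\<F> \<subseteq> \<V>" "topspace T \<subseteq> \<Union>((\<lambda>U. U \<union> K) ` \<F>)"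
      by (metis finite_subset_image)
    then have "topspace S \<subseteq> \<Union>\<F>"
      using assms(2) unfolding K_def by blast
    then show ?thesis using \<F> unfolding \<V>_def by blast
  qed blast
qed

lemma openin_subbase_topology_Un:
  assumes top: "openin T (Y \<union> K)" and sub: "\<And>S. B S \<Longrightarrow> openin T (S \<union> K)"
    and U: "openin (topology (arbitrary union_of (finite intersection_of B relative_to Y))) U"
    and "U \<noteq> {}"
  shows "openin T (U \<union> K)"
proof -
  obtain \<V> where \<V>: "\<V> \<subseteq> Collect (finite intersection_of B relative_to Y)" "\<Union>\<V> = U"
    using U[unfolded openin_subbase] unfolding union_of_def arbitrary_def by auto
  have basic: "openin T (V \<union> K)" if "V \<in> \<V>" for V
  proof -
    obtain \<S> where \<S>: "finite \<S>" "\<S> \<subseteq> Collect B" "V = Y \<inter> \<Inter>\<S>"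
      using \<open>V \<in> \<V>\<close> \<V>(1) unfolding relative_to_def intersection_of_def by auto
    have "V \<union> K = (Y \<union> K) \<inter> \<Inter>((\<lambda>S. S \<union> K) ` \<S>)"
      using \<S>(3) by auto
    moreover have "openin T (\<Inter>((\<lambda>S. S \<union> K) ` insert Y \<S>))"
      using \<S> top sub by (intro openin_Inter) auto
    ultimately show ?thesis
      by simp
  qed
  have "\<V> \<noteq> {}"
    using \<V>(2) \<open>U \<noteq> {}\<close> by auto
  then have "U \<union> K = \<Union>((\<lambda>V. V \<union> K) ` \<V>)"
    using \<V>(2) by auto
  moreover have "openin T (\<Union>((\<lambda>V. V \<union> K) ` \<V>))"
    using basic by (intro openin_Union) auto
  ultimately show ?thesis
    by simp
qed

lemma order_component_comparable_closed:
  assumes "Y \<in> (order_components :: 'a::order set set)" "y \<in> Y" "z \<le> y \<or> y \<le> z"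
  shows "z \<in> Y"
proof -
  obtain x where Y: "Y = comparable_rel\<^sup>+ `` {x}"
    using assms(1) unfolding order_components_def quotient_def by blast
  have "(x, y) \<in> comparable_rel\<^sup>+" using Y assms(2) by blast
  moreover have "(y, z) \<in> comparable_rel" using assms(3) unfolding comparable_rel_def by auto
  ultimately show ?thesis using Y by auto
qed

lemma priestley_space_open_not_atMost:
  assumes "priestley_space T"
  shows "openin T (- {..y})"
proof (subst openin_subopen, intro ballI)
  fix w assume "w \<in> - {..y}"
  then obtain U where U: "closedin T U" "\<forall>u\<in>U. \<forall>v. v \<le> u \<longrightarrow> v \<in> U" "y \<in> U" "w \<notin> U"
    using assms unfolding priestley_space_def by (metis ComplD atMost_iff)
  have "openin T (- U)"
    using U(1) assms unfolding priestley_space_def by (simp add: closedin_def Compl_eq_Diff_UNIV)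
  then show "\<exists>V. openin T V \<and> w \<in> V \<and> V \<subseteq> - {..y}"
    using U(2-4) by blast
qed

lemma priestley_space_open_not_atLeast:
  assumes "priestley_space T"
  shows "openin T (- {y..})"
proof (subst openin_subopen, intro ballI)
  fix w assume "w \<in> - {y..}"
  then obtain U where U: "openin T U" "\<forall>u\<in>U. \<forall>v. v \<le> u \<longrightarrow> v \<in> U" "w \<in> U" "y \<notin> U"
    using assms unfolding priestley_space_def by (metis ComplD atLeast_iff)
  then show "\<exists>V. openin T V \<and> w \<in> V \<and> V \<subseteq> - {y..}"
    by blast
qed

lemma priestley_space_open_interval_subbase_Un:
  assumes "priestley_space T" "Y \<in> order_components" "S \<in> interval_subbase Y"
  shows "openin T (S \<union> - Y)"
proof -
  obtain y where y: "y \<in> Y" and "S = Y - {z\<in>Y. z \<le> y} \<or> S = Y - {z\<in>Y. y \<le> z}"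
    using assms(3) unfolding interval_subbase_def by blast
  moreover have "{..y} \<subseteq> Y" "{y..} \<subseteq> Y"
    using order_component_comparable_closed[OF assms(2) y] by auto
  ultimately have "S \<union> - Y = - {..y} \<or> S \<union> - Y = - {y..}"
    by auto
  then show ?thesis
    using priestley_space_open_not_atMost[OF assms(1)] priestley_space_open_not_atLeast[OF assms(1)]
    by metis
qed

theorem lemma2p2:
  assumes "representable TYPE('a::order)"
    and "Y \<in> (order_components :: 'a set set)"
  shows "compact_space (interval_topology Y)"
proof -
  obtain T :: "'a topology" where T: "priestley_space T"
    using assms(1) unfolding representable_def by blast
  have topT: "topspace T = UNIV"
    using T unfolding priestley_space_def by blast
  have topY: "topspace (interval_topology Y) = Y"
    unfolding interval_topology_def by simp
  have "openin T (Y \<union> - Y)"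
    using topT by (metis Compl_partition openin_topspace)
  note lift = openin_subbase_topology_Un[where B = "\<lambda>S. S \<in> interval_subbase Y",
      OF this priestley_space_open_interval_subbase_Un[OF T assms(2)],
      folded interval_topology_def]
  show ?thesis
  proof (rule compact_space_if_open_Un_complement)
    show "compact_space T"
      using T unfolding priestley_space_def by blast
  qed (use lift in \<open>simp_all add: topT topY Compl_eq_Diff_UNIV\<close>)
qed

end
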